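(* Let $n\ge2$ be an integer, $\lambda>0$, $\alpha\in(0,1)$. For $\beta\in\mathbb{R}$ let $\bar S_\beta$ be the space of radially symmetric functions $\eta$ on $\mathbb{R}^n$ with $$\|\eta\|_{\hat{},\beta}:=\sup_{y\in\mathbb{R}^n}\big\|(1+|y|)^\beta\eta\big\|_{C^{0,\alpha}(B_y(1))}<+\infty,$$ where $B_y(1)$ is the unit ball centered at $y$. Let $\eta\in\bar S_\beta$ with $\beta>\frac{n+1}{2}$. Then the equation $$h''+\frac{n-1}{r}h'+\lambda h=\eta,\qquad r=|y|,$$ has a solution $h\in\bar S_{\frac{n-1}{2}}$ satisfying $\|h\|_{\hat{},\frac{n-1}{2}}\le C\|\eta\|_{\hat{},\beta}$, with $C$ independent of $\eta$. *)

theory Defs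
  imports "HOL-Analysis.Analysis"
begin

definition radial :: "('a::real_normed_vector \<Rightarrow> real) \<Rightarrow> bool" where
  "radial f \<longleftrightarrow> (\<forall>x y. norm x = norm y \<longrightarrow> f x = f y)"

definition holder_norm :: "real \<Rightarrow> 'a::metric_space set \<Rightarrow> ('a \<Rightarrow> real) \<Rightarrow> ereal" where
  "holder_norm \<alpha> B f =
     (SUP x\<in>B. ereal \<bar>f x\<bar>) +
     (SUP p\<in>{(x, z). x \<in> B \<and> z \<in> B \<and> x \<noteq> z}. ereal (\<bar>f (fst p) - f (snd p)\<bar> / (dist (fst p) (snd p) powr \<alpha>)))"

definition wnorm :: "real \<Rightarrow> real \<Rightarrow> ('a::real_normed_vector \<Rightarrow> real) \<Rightarrow> ereal" where
  "wnorm \<alpha> \<beta> f = (SUP y. holder_norm \<alpha> (ball y 1) (\<lambda>x. (1 + norm x) powr \<beta> * f x))"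

definition Sbar :: "real \<Rightarrow> real \<Rightarrow> ('a::real_normed_vector \<Rightarrow> real) set" where
  "Sbar \<alpha> \<beta> = {f. radial f \<and> wnorm \<alpha> \<beta> f < \<infinity>}"

end

theory Submission
  imports Defs
begin

text \<open>Writing \<open>m = (N - 1)/2\<close>, the radial equation is solved by a Volterra
  integral equation, whose solution is obtained by a contraction argument and grows at most
  like \<open>exp (\<surd>(2\<lambda>) r)\<close>. Decay comes from the substitution \<open>u = r\<^sup>m g\<close>, which
  turns the equation into \<open>u'' + (\<lambda> - m(m - 1)/r\<^sup>2) u = r\<^sup>m \<eta>\<close>. Once
  \<open>\<lambda> - m(m - 1)/r\<^sup>2 \<ge> \<lambda>/2\<close> the energy \<open>u'\<^sup>2 + (\<lambda> - m(m - 1)/r\<^sup>2) u\<^sup>2\<close> grows at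
  relative rate \<open>O(r\<^sup>-\<^sup>1\<^sup>-\<^sup>\<delta>)\<close>, where \<open>\<delta> > 0\<close> because \<open>\<beta> > (N + 1)/2\<close>; this rate is
  integrable, so the energy stays bounded and \<open>|g|, |g'| = O(r\<^sup>-\<^sup>m)\<close>. A bound on
  \<open>(1 + r)\<^sup>m g\<close> and its derivative controls its Hoelder norm on unit balls.\<close>

section \<open>The inverse of the radial Laplacian\<close>

definition radial_mass :: "nat \<Rightarrow> (real \<Rightarrow> real) \<Rightarrow> real \<Rightarrow> real" where
  "radial_mass N F t = integral {0..t} (\<lambda>s. s^(N-1) * F s)"

definition radial_flux :: "nat \<Rightarrow> (real \<Rightarrow> real) \<Rightarrow> real \<Rightarrow> real" where
  "radial_flux N F t = (if t \<le> 0 then 0 else radial_mass N F t / t^(N-1))"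

text \<open>\<open>v = radial_potential N F\<close> solves \<open>(r\<^sup>N\<^sup>-\<^sup>1 v')' = r\<^sup>N\<^sup>-\<^sup>1 F\<close>, i.e.
  \<open>v'' + (N - 1)/r v' = F\<close>, with \<open>v(0) = v'(0) = 0\<close>; its derivative is the flux.\<close>
definition radial_potential :: "nat \<Rightarrow> (real \<Rightarrow> real) \<Rightarrow> real \<Rightarrow> real" where
  "radial_potential N F r = integral {0..r} (radial_flux N F)"

lemma has_real_derivative_radial_mass:
  assumes F: "continuous_on UNIV F" and t: "t > 0"
  shows "(radial_mass N F has_real_derivative t^(N-1) * F t) (at t)"
proof -
  have "(radial_mass N F has_real_derivative t^(N-1) * F t) (at t within {0..t+1})"
    unfolding radial_mass_def using t
    by (intro integral_has_real_derivative) (auto intro!: continuous_intros continuous_on_subset[OF F])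
  thus ?thesis using at_within_Icc_at[of 0 t "t+1"] t by simp
qed

lemma abs_radial_flux_le:
  assumes F: "continuous_on UNIV F" and G: "continuous_on {0..t} G"
    and le: "\<And>s. s \<in> {0..t} \<Longrightarrow> \<bar>F s\<bar> \<le> G s"
  shows "\<bar>radial_flux N F t\<bar> \<le> integral {0..t} G"
proof (cases "t \<le> 0")
  case True
  have "0 \<le> integral {0..t} G"
    using le by (intro integral_nonneg integrable_continuous_interval G) (meson abs_ge_zero order_trans)
  then show ?thesis using True by (simp add: radial_flux_def)
next
  case False
  then have t: "t > 0" by simp
  have "\<bar>radial_mass N F t\<bar> \<le> integral {0..t} (\<lambda>s. t^(N-1) * G s)"
    unfolding radial_mass_def real_norm_def[symmetric]
  proof (rule integral_norm_bound_integral)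
    show "(\<lambda>s. s ^ (N - 1) * F s) integrable_on {0..t}"
      by (rule integrable_continuous_interval) (auto intro!: continuous_intros continuous_on_subset[OF F])
    show "(\<lambda>s. t ^ (N - 1) * G s) integrable_on {0..t}"
      by (rule integrable_continuous_interval) (auto intro!: continuous_intros G)
    fix s assume s: "s \<in> {0..t}"
    have "norm (s ^ (N - 1) * F s) = s^(N-1) * \<bar>F s\<bar>" using s by (simp add: abs_mult)
    also have "\<dots> \<le> t^(N-1) * G s"
      using s le[OF s] by (intro mult_mono power_mono) auto
    finally show "norm (s ^ (N - 1) * F s) \<le> t ^ (N - 1) * G s" .
  qed
  also have "\<dots> = t^(N-1) * integral {0..t} G" by simp
  finally show ?thesis using t by (simp add: radial_flux_def abs_div divide_le_eq mult.commute)
qed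

lemma has_real_derivative_radial_flux:
  assumes F: "continuous_on UNIV F" and t: "t > 0"
  shows "(radial_flux N F has_real_derivative F t - real (N-1) / t * radial_flux N F t) (at t)"
proof -
  have nz: "t^(N-1) \<noteq> 0" using t by simp
  note d = DERIV_quotient[OF has_real_derivative_radial_mass[OF F t, of N] DERIV_pow[of "N-1" t UNIV] nz]
  have eq: "(t^(N-1) * F t * t^(N-1) - real (N-1) * t^(N-1-Suc 0) * radial_mass N F t) / ((t^(N-1))^Suc (Suc 0))
     = F t - real (N-1) / t * radial_flux N F t"
  proof (cases "N - 1 = 0")
    case True thus ?thesis by simp
  next
    case False
    then have tp: "t^(N-1) = t * t^(N-1-Suc 0)" by (cases "N - 1") auto
    have pp: "t^(N-1-Suc 0) > 0" using t by simp
    have alg: "\<And>p f c a. p > 0 \<Longrightarrow> ((t*p)*f*(t*p) - c*p*a)/((t*p)^Suc (Suc 0)) = f - c/t*(a/(t*p))"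
      using t by (simp add: field_simps power2_eq_square)
    show ?thesis unfolding radial_flux_def using t alg[OF pp] by (simp only: tp) simp
  qed
  show ?thesis
    by (rule has_field_derivative_transform_within_open[OF d[unfolded eq], of "{0<..}"])
       (auto simp: t radial_flux_def)
qed

lemma continuous_on_radial_flux:
  assumes F: "continuous_on UNIV F"
  shows "continuous_on {0..b} (radial_flux N F)"
proof -
  have "bounded (F ` {0..1})"
    by (intro compact_imp_bounded compact_continuous_image continuous_on_subset[OF F]) auto
  then obtain B where B: "\<And>s. s \<in> {0..1} \<Longrightarrow> \<bar>F s\<bar> \<le> B"
    unfolding bounded_real by blast
  \<comment> \<open>at the origin the flux is \<open>O(r)\<close>\<close>
  have at0: "continuous (at 0 within {0..b}) (radial_flux N F)"
  proof (rule continuous_within_eps_delta[THEN iffD2, rule_format])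
    fix e :: real assume e: "e > 0"
    have B0: "0 \<le> B" using B[of 0] by auto
    show "\<exists>d>0. \<forall>x'\<in>{0..b}. dist x' 0 < d \<longrightarrow> dist (radial_flux N F x') (radial_flux N F 0) < e"
    proof (intro exI[of _ "min 1 (e/(B+1))"] conjI ballI impI)
      show "0 < min 1 (e / (B + 1))" using e B0 by auto
      fix x assume x: "x \<in> {0..b}" "dist x 0 < min 1 (e / (B + 1))"
      have "\<bar>radial_flux N F x\<bar> \<le> integral {0..x} (\<lambda>_. B)"
        using x B by (intro abs_radial_flux_le[OF F]) auto
      also have "\<dots> = x * B" using x by simp
      also have "\<dots> \<le> x * (B + 1)" using x by (intro mult_left_mono) auto
      also have "\<dots> < e" using x B0 by (simp add: less_divide_eq)
      finally show "dist (radial_flux N F x) (radial_flux N F 0) < e" by (simp add: radial_flux_def dist_real_def)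
    qed
  qed
  have pos: "isCont (radial_flux N F) x" if "x > 0" for x
    using DERIV_isCont[OF has_real_derivative_radial_flux[OF F that]] .
  show ?thesis
    unfolding continuous_on_eq_continuous_within
  proof
    fix x assume "x \<in> {0..b}"
    then consider "x = 0" | "x > 0" by fastforce
    then show "continuous (at x within {0..b}) (radial_flux N F)"
      by cases (use at0 pos continuous_at_imp_continuous_within in auto)
  qed
qed

lemma has_real_derivative_radial_potential:
  assumes F: "continuous_on UNIV F" and t: "t > 0"
  shows "(radial_potential N F has_real_derivative radial_flux N F t) (at t)"
proof -
  have "(radial_potential N F has_real_derivative radial_flux N F t) (at t within {0..t+1})"
    unfolding radial_potential_def using t
    by (intro integral_has_real_derivative[OF continuous_on_radial_flux[OF F]]) auto
  thus ?thesis using at_within_Icc_at[of 0 t "t+1"] t by simp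
qed

lemma continuous_on_radial_potential_max:
  assumes F: "continuous_on UNIV F"
  shows "continuous_on UNIV (\<lambda>r. radial_potential N F (max r 0))"
proof -
  have "isCont (\<lambda>r. radial_potential N F (max r 0)) x" for x
  proof -
    let ?b = "\<bar>x\<bar> + 1"
    have "continuous_on {0..?b} (radial_potential N F)"
      unfolding radial_potential_def
      by (intro indefinite_integral_continuous_1 integrable_continuous_interval continuous_on_radial_flux F)
    then have "continuous_on {-?b..?b} (\<lambda>r. radial_potential N F (max r 0))"
      by (rule continuous_on_compose2) (auto intro!: continuous_intros)
    then show ?thesis by (rule continuous_on_interior) auto
  qed
  then show ?thesis by (simp add: continuous_at_imp_continuous_on)
qed

lemma radial_potential_diff:
  assumes F: "continuous_on UNIV F" and G: "continuous_on UNIV G"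
  shows "radial_potential N (\<lambda>s. F s - G s) t = radial_potential N F t - radial_potential N G t"
proof -
  have integrable: "(\<lambda>s. s^(N-1) * H s) integrable_on {0..s}"
    if "continuous_on UNIV H" for H :: "real \<Rightarrow> real" and s :: real
    by (auto intro!: integrable_continuous_interval continuous_intros continuous_on_subset[OF that])
  have "radial_mass N (\<lambda>s. F s - G s) s = radial_mass N F s - radial_mass N G s" for s
    unfolding radial_mass_def right_diff_distrib
    by (intro integral_diff integrable F G)
  then have eq: "radial_flux N (\<lambda>s. F s - G s) = (\<lambda>s. radial_flux N F s - radial_flux N G s)"
    by (simp add: radial_flux_def diff_divide_distrib fun_eq_iff)
  show ?thesis
    unfolding radial_potential_def eq
    by (intro integral_diff integrable_continuous_interval continuous_on_radial_flux F G)
qed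

lemma integral_const_add_exp:
  fixes a b M t :: real
  assumes t: "0 \<le> t" and M: "M \<noteq> 0"
  shows "integral {0..t} (\<lambda>s. a + b * exp (M * s)) = a * t + b * (exp (M * t) - 1) / M"
proof -
  have "((\<lambda>s. a + b * exp (M * s)) has_integral
      ((a * t + b * exp (M * t) / M) - (a * 0 + b * exp (M * 0) / M))) {0..t}"
    by (rule fundamental_theorem_of_calculus)
       (use t M in \<open>auto intro!: derivative_eq_intros simp: has_real_derivative_iff_has_vector_derivative[symmetric]\<close>)
  then show ?thesis using M by (simp add: integral_unique right_diff_distrib diff_divide_distrib)
qed

lemma integral_linear_add_exp:
  fixes a b M t :: real
  assumes t: "0 \<le> t" and M: "M \<noteq> 0"
  shows "integral {0..t} (\<lambda>s. a * s + b * exp (M * s) / M) = a * t^2 / 2 + b * (exp (M * t) - 1) / M^2"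
proof -
  have "((\<lambda>s. a * s + b * exp (M * s) / M) has_integral
      ((a * t^2 / 2 + b * exp (M * t) / M^2) - (a * 0^2 / 2 + b * exp (M * 0) / M^2))) {0..t}"
    by (rule fundamental_theorem_of_calculus)
       (use t M in \<open>auto intro!: derivative_eq_intros
         simp: has_real_derivative_iff_has_vector_derivative[symmetric] power2_eq_square field_simps\<close>)
  then show ?thesis using M by (simp add: integral_unique right_diff_distrib diff_divide_distrib)
qed

lemma abs_radial_flux_le_exp:
  assumes F: "continuous_on UNIV F" and t: "0 \<le> t" and M: "M > 0" and ab: "0 \<le> a" "0 \<le> b"
    and le: "\<And>s. s \<in> {0..t} \<Longrightarrow> \<bar>F s\<bar> \<le> a + b * exp (M * s)"
  shows "\<bar>radial_flux N F t\<bar> \<le> a * t + b * exp (M * t) / M"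
proof -
  have "\<bar>radial_flux N F t\<bar> \<le> integral {0..t} (\<lambda>s. a + b * exp (M * s))"
    by (rule abs_radial_flux_le[OF F _ le]) (auto intro!: continuous_intros)
  also have "\<dots> = a * t + b * (exp (M * t) - 1) / M"
    using integral_const_add_exp[OF t, of M a b] M by simp
  also have "\<dots> \<le> a * t + b * exp (M * t) / M"
    using ab M by (intro add_left_mono divide_right_mono mult_left_mono) auto
  finally show ?thesis .
qed

lemma abs_radial_potential_le_exp:
  assumes F: "continuous_on UNIV F" and r: "0 \<le> r" and M: "M > 0" and ab: "0 \<le> a" "0 \<le> b"
    and le: "\<And>s. s \<in> {0..r} \<Longrightarrow> \<bar>F s\<bar> \<le> a + b * exp (M * s)"
  shows "\<bar>radial_potential N F r\<bar> \<le> a * r^2 / 2 + b * exp (M * r) / M^2"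
proof -
  have "\<bar>radial_potential N F r\<bar> \<le> integral {0..r} (\<lambda>s. a * s + b * exp (M * s) / M)"
    unfolding radial_potential_def real_norm_def[symmetric]
  proof (rule integral_norm_bound_integral)
    show "radial_flux N F integrable_on {0..r}"
      by (intro integrable_continuous_interval continuous_on_radial_flux F)
    show "(\<lambda>s. a * s + b * exp (M * s) / M) integrable_on {0..r}"
      by (intro integrable_continuous_interval continuous_intros) (use M in auto)
    fix s assume "s \<in> {0..r}"
    then show "norm (radial_flux N F s) \<le> a * s + b * exp (M * s) / M"
      using le by (auto intro!: abs_radial_flux_le_exp[OF F _ M ab])
  qed
  also have "\<dots> = a * r^2 / 2 + b * (exp (M * r) - 1) / M^2"
    using integral_linear_add_exp[OF r, of M a b] M by simp
  also have "\<dots> \<le> a * r^2 / 2 + b * exp (M * r) / M^2"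
    using ab M by (intro add_left_mono divide_right_mono mult_left_mono) auto
  finally show ?thesis .
qed

lemma power2_le_4_mult_exp:
  assumes "0 \<le> (x::real)" shows "x^2 \<le> 4 * exp x"
proof -
  have "(1 + x/2)^2 \<le> exp (x/2)^2"
    using exp_ge_add_one_self[of "x/2"] assms by (intro power_mono) auto
  also have "exp (x/2)^2 = exp x" by (simp add: exp_double[symmetric])
  finally show ?thesis using assms by (simp add: power2_eq_square field_simps)
qed

lemma exp_weighted_radial_potential_le:
  fixes lam K B r :: real
  assumes lam: "lam > 0" and F: "continuous_on UNIV F" and r: "0 \<le> r" and K: "0 \<le> K" and B: "0 \<le> B"
    and le: "\<And>s. 0 \<le> s \<Longrightarrow> \<bar>F s\<bar> \<le> K + lam * B * exp (sqrt (2 * lam) * s)"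
  shows "exp (- (sqrt (2 * lam) * r)) * \<bar>radial_potential N F r\<bar> \<le> K / lam + B / 2"
proof -
  define M where "M = sqrt (2 * lam)"
  have M: "M > 0" "M^2 = 2 * lam" using lam by (auto simp: M_def)
  have "\<bar>radial_potential N F r\<bar> \<le> K * r^2 / 2 + lam * B * exp (M * r) / M^2"
    using le lam B by (intro abs_radial_potential_le_exp[OF F r M(1) K]) (auto simp: M_def)
  then have "exp (- (M * r)) * \<bar>radial_potential N F r\<bar>
      \<le> K / 2 * (r^2 * exp (- (M * r))) + lam * B / M^2"
    by (auto dest: mult_left_mono[of _ _ "exp (- (M * r))"] simp: field_simps exp_minus)
  also have "r^2 * exp (- (M * r)) \<le> 4 / M^2"
    using power2_le_4_mult_exp[of "M * r"] M r lam by (simp add: exp_minus field_simps power_mult_distrib)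
  then have "K / 2 * (r^2 * exp (- (M * r))) \<le> K / 2 * (4 / M^2)"
    using K by (intro mult_left_mono) auto
  finally show ?thesis using M lam by (simp add: M_def)
qed

section \<open>Solving the radial equation\<close>

text \<open>The Volterra operator \<open>g \<mapsto> radial_potential N (\<eta> - \<lambda> g)\<close> conjugated by the
  weight \<open>exp (\<surd>(2\<lambda>) r)\<close>, i.e. acting on \<open>u = exp (- \<surd>(2\<lambda>) r) g\<close>; it is extended
  to \<open>r < 0\<close> by its value at \<open>0\<close>, so that it acts on bounded continuous functions on \<open>\<real>\<close>.\<close>
definition weighted_volterra :: "nat \<Rightarrow> real \<Rightarrow> (real \<Rightarrow> real) \<Rightarrow> (real \<Rightarrow> real) \<Rightarrow> real \<Rightarrow> real" where
  "weighted_volterra N lam eta u r = exp (- (sqrt (2 * lam) * max r 0))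
     * radial_potential N (\<lambda>s. eta s - lam * (exp (sqrt (2 * lam) * s) * u s)) (max r 0)"

lemma continuous_on_weighted_volterra:
  assumes "continuous_on UNIV eta" and "continuous_on UNIV u"
  shows "continuous_on UNIV (weighted_volterra N lam eta u)"
  unfolding weighted_volterra_def
  by (intro continuous_intros continuous_on_radial_potential_max[unfolded o_def] assms)

lemma abs_weighted_volterra_le:
  assumes lam: "lam > 0" and eta: "continuous_on UNIV eta" and u: "continuous_on UNIV u"
    and K: "K \<ge> 0" and etaK: "\<And>s. s \<ge> 0 \<Longrightarrow> \<bar>eta s\<bar> \<le> K" and B: "\<And>s. \<bar>u s\<bar> \<le> B"
  shows "\<bar>weighted_volterra N lam eta u r\<bar> \<le> K / lam + B / 2"
proof -
  define M where "M = sqrt (2 * lam)"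
  have "\<bar>eta s - lam * (exp (M * s) * u s)\<bar> \<le> K + lam * B * exp (M * s)" if "s \<ge> 0" for s
  proof -
    have "\<bar>eta s - lam * (exp (M * s) * u s)\<bar> \<le> \<bar>eta s\<bar> + lam * (exp (M * s) * \<bar>u s\<bar>)"
      using lam abs_triangle_ineq4[of "eta s" "lam * (exp (M * s) * u s)"] by (simp add: abs_mult)
    also have "\<dots> \<le> K + lam * (exp (M * s) * B)"
      using etaK[OF that] B[of s] lam by (intro add_mono mult_left_mono) auto
    finally show ?thesis by (simp add: algebra_simps)
  qed
  then show ?thesis
    unfolding weighted_volterra_def M_def[symmetric] using B[of 0]
    by (auto simp: abs_mult M_def intro!: exp_weighted_radial_potential_le lam eta u K continuous_intros)
qed

lemma abs_weighted_volterra_diff_le: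
  assumes lam: "lam > 0" and eta: "continuous_on UNIV eta"
    and u: "continuous_on UNIV u" and v: "continuous_on UNIV v" and D: "\<And>s. \<bar>u s - v s\<bar> \<le> D"
  shows "\<bar>weighted_volterra N lam eta u r - weighted_volterra N lam eta v r\<bar> \<le> D / 2"
proof -
  define M where "M = sqrt (2 * lam)"
  define F where "F w s = eta s - lam * (exp (M * s) * w s)" for w :: "real \<Rightarrow> real" and s
  have F: "continuous_on UNIV (F w)" if "continuous_on UNIV w" for w
    unfolding F_def by (intro continuous_intros eta that)
  have "\<bar>F u s - F v s\<bar> \<le> 0 + lam * D * exp (M * s)" for s
  proof -
    have "F u s - F v s = - (lam * exp (M * s) * (u s - v s))"
      unfolding F_def by (simp add: algebra_simps)
    then have "\<bar>F u s - F v s\<bar> = lam * exp (M * s) * \<bar>u s - v s\<bar>"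
      using lam by (simp add: abs_mult)
    also have "\<dots> \<le> lam * exp (M * s) * D" using D[of s] lam by (intro mult_left_mono) auto
    finally show ?thesis by (simp add: algebra_simps)
  qed
  then have "exp (- (M * max r 0)) * \<bar>radial_potential N (\<lambda>s. F u s - F v s) (max r 0)\<bar> \<le> 0 / lam + D / 2"
    unfolding M_def using lam D[of 0] by (intro exp_weighted_radial_potential_le) (auto intro!: F u v continuous_intros)
  then show ?thesis
    by (simp add: weighted_volterra_def M_def[symmetric] F_def[symmetric] radial_potential_diff[OF F F, OF u v]
        abs_mult right_diff_distrib[symmetric])
qed

lemma radial_volterra_fixed_point:
  fixes lam K :: real and eta :: "real \<Rightarrow> real"
  assumes lam: "lam > 0" and eta: "continuous_on UNIV eta" and K: "K \<ge> 0"
    and etaK: "\<And>s. s \<ge> 0 \<Longrightarrow> \<bar>eta s\<bar> \<le> K"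
  shows "\<exists>g. continuous_on UNIV g \<and> (\<forall>r\<ge>0. g r = radial_potential N (\<lambda>s. eta s - lam * g s) r)
           \<and> (\<forall>s\<ge>0. \<bar>g s\<bar> \<le> 2 * K / lam * exp (sqrt (2 * lam) * s))"
proof -
  define T where "T u = Bcontfun (weighted_volterra N lam eta (apply_bcontfun u))" for u :: "real \<Rightarrow>\<^sub>C real"
  have T: "apply_bcontfun (T u) = weighted_volterra N lam eta (apply_bcontfun u)" for u
  proof -
    have "\<bar>weighted_volterra N lam eta (apply_bcontfun u) r\<bar> \<le> K / lam + norm u / 2" for r
      by (intro abs_weighted_volterra_le lam eta K etaK norm_bounded[of u, simplified]) auto
    then have "weighted_volterra N lam eta (apply_bcontfun u) \<in> bcontfun"
      by (intro bcontfun_normI continuous_on_weighted_volterra eta) auto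
    then show ?thesis by (simp add: T_def Bcontfun_inverse)
  qed
  have "dist (T u) (T v) \<le> 1/2 * dist u v" for u v
  proof (rule dist_bound)
    fix r
    have "\<bar>weighted_volterra N lam eta u r - weighted_volterra N lam eta v r\<bar> \<le> dist u v / 2"
      using dist_bounded[of u _ v] by (intro abs_weighted_volterra_diff_le lam eta) (auto simp: dist_real_def)
    then show "dist (T u r) (T v r) \<le> 1/2 * dist u v" by (simp add: T dist_real_def)
  qed
  then obtain u where fixed: "T u = u"
    using banach_fix_type[of "1/2" T] by auto
  then have u_eq: "apply_bcontfun u r = weighted_volterra N lam eta (apply_bcontfun u) r" for r
    using T[of u] by simp
  have "norm u \<le> K / lam + norm u / 2"
    by (rule norm_bound) (auto simp: u_eq intro!: abs_weighted_volterra_le lam eta K etaK norm_bounded[of u, simplified])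
  then have norm_u: "norm u \<le> 2 * K / lam" by simp
  define g where "g s = exp (sqrt (2 * lam) * s) * apply_bcontfun u s" for s
  have "g r = radial_potential N (\<lambda>s. eta s - lam * g s) r" if "r \<ge> 0" for r
    using u_eq[of r] that by (simp add: g_def weighted_volterra_def exp_minus)
  moreover have "continuous_on UNIV g" unfolding g_def by (intro continuous_intros) auto
  moreover have "\<bar>g s\<bar> \<le> 2 * K / lam * exp (sqrt (2 * lam) * s)" for s
  proof -
    have "\<bar>apply_bcontfun u s\<bar> \<le> 2 * K / lam" using norm_bounded[of u s] norm_u by simp
    then have "exp (sqrt (2 * lam) * s) * \<bar>apply_bcontfun u s\<bar> \<le> exp (sqrt (2 * lam) * s) * (2 * K / lam)"
      by (intro mult_left_mono) auto
    then show ?thesis by (simp add: g_def abs_mult mult.commute)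
  qed
  ultimately show ?thesis by blast
qed

definition radial_solution ::
    "nat \<Rightarrow> real \<Rightarrow> (real \<Rightarrow> real) \<Rightarrow> (real \<Rightarrow> real) \<Rightarrow> (real \<Rightarrow> real) \<Rightarrow> (real \<Rightarrow> real) \<Rightarrow> bool" where
  "radial_solution N lam eta g g' g'' \<longleftrightarrow> continuous_on UNIV g
     \<and> (\<forall>r>0. (g has_real_derivative g' r) (at r) \<and> (g' has_real_derivative g'' r) (at r))
     \<and> (\<forall>r>0. g'' r + (real N - 1) / r * g' r + lam * g r = eta r)"

lemma radial_ode_solvable:
  fixes N :: nat and lam K R :: real and eta :: "real \<Rightarrow> real"
  assumes N: "N \<ge> 1" and lam: "lam > 0" and eta: "continuous_on UNIV eta" and K: "K \<ge> 0"
    and etaK: "\<And>s. s \<ge> 0 \<Longrightarrow> \<bar>eta s\<bar> \<le> K" and R: "R \<ge> 0"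
  defines "M \<equiv> sqrt (2 * lam)"
  shows "\<exists>g g' g''. radial_solution N lam eta g g' g''
     \<and> (\<forall>s\<in>{0..R}. \<bar>g s\<bar> \<le> 2 / lam * exp (M * R) * K)
     \<and> (\<forall>s\<in>{0..R}. \<bar>g' s\<bar> \<le> (R + 2 * exp (M * R) / M) * K)"
proof -
  have M: "M > 0" using lam by (simp add: M_def)
  obtain g where gc: "continuous_on UNIV g"
    and g_eq: "\<And>r. r \<ge> 0 \<Longrightarrow> g r = radial_potential N (\<lambda>s. eta s - lam * g s) r"
    and g_exp: "\<And>s. s \<ge> 0 \<Longrightarrow> \<bar>g s\<bar> \<le> 2 * K / lam * exp (M * s)"
    using radial_volterra_fixed_point[OF lam eta K etaK, of N] unfolding M_def by blast
  define F where "F = (\<lambda>s. eta s - lam * g s)"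
  have Fc: "continuous_on UNIV F" unfolding F_def by (intro continuous_intros eta gc)
  define g' where "g' = radial_flux N F"
  define g'' where "g'' r = F r - real (N - 1) / r * radial_flux N F r" for r
  have "(g has_real_derivative g' r) (at r)" if "r > 0" for r
    unfolding g'_def
    by (rule has_field_derivative_transform_within_open[OF has_real_derivative_radial_potential[OF Fc that],
          of "{0<..}"]) (use that g_eq in \<open>auto simp: F_def\<close>)
  moreover have "(g' has_real_derivative g'' r) (at r)" if "r > 0" for r
    unfolding g'_def g''_def by (rule has_real_derivative_radial_flux[OF Fc that])
  moreover have "g'' r + (real N - 1) / r * g' r + lam * g r = eta r" for r
    using N by (simp add: g''_def g'_def F_def of_nat_diff)
  moreover have "\<bar>g s\<bar> \<le> 2 / lam * exp (M * R) * K" if s: "s \<in> {0..R}" for s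
  proof -
    have "2 * K / lam * exp (M * s) \<le> 2 * K / lam * exp (M * R)"
      using s M K lam by (intro mult_left_mono) auto
    then show ?thesis using g_exp[of s] s by (simp add: algebra_simps)
  qed
  moreover have "\<bar>g' s\<bar> \<le> (R + 2 * exp (M * R) / M) * K" if s: "s \<in> {0..R}" for s
  proof -
    have "\<bar>g' s\<bar> \<le> K * s + 2 * K * exp (M * s) / M"
      unfolding g'_def
    proof (rule abs_radial_flux_le_exp[OF Fc _ M K])
      fix t assume t: "t \<in> {0..s}"
      have "\<bar>F t\<bar> \<le> \<bar>eta t\<bar> + lam * \<bar>g t\<bar>"
        unfolding F_def using lam abs_triangle_ineq4[of "eta t" "lam * g t"] by (simp add: abs_mult)
      also have "\<dots> \<le> K + lam * (2 * K / lam * exp (M * t))"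
        using t etaK g_exp lam by (intro add_mono mult_left_mono) auto
      finally show "\<bar>F t\<bar> \<le> K + 2 * K * exp (M * t)" using lam by simp
    qed (use K s in auto)
    also have "\<dots> \<le> K * R + 2 * K * exp (M * R) / M"
      using s K M by (intro add_mono mult_left_mono divide_right_mono) auto
    finally show ?thesis by (simp add: algebra_simps)
  qed
  ultimately show ?thesis unfolding radial_solution_def using gc by blast
qed

section \<open>Decay by an energy estimate\<close>

text \<open>The energy \<open>u'\<^sup>2 + (\<lambda> - m(m - 1)/r\<^sup>2) u\<^sup>2\<close> of \<open>u = r\<^sup>m g\<close>. For \<open>m = (N - 1)/2\<close> the
  substitution removes the first-order term: \<open>u'' + (\<lambda> - m(m - 1)/r\<^sup>2) u = r\<^sup>m \<eta>\<close>.\<close>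
definition radial_energy :: "real \<Rightarrow> real \<Rightarrow> (real \<Rightarrow> real) \<Rightarrow> (real \<Rightarrow> real) \<Rightarrow> real \<Rightarrow> real" where
  "radial_energy lam m g g' r =
     (m * r powr m / r * g r + r powr m * g' r)^2 + (lam - m * (m - 1) / r^2) * (r powr m * g r)^2"

lemma has_real_derivative_powr_div:
  assumes "r > 0"
  shows "((\<lambda>r. r powr m) has_real_derivative m * r powr m / r) (at r)"
  using has_real_derivative_powr[OF assms, of m] assms by (simp add: powr_diff)

lemma has_real_derivative_radial_energy:
  fixes g g' g'' eta :: "real \<Rightarrow> real" and lam m r :: real
  assumes dg: "\<And>r. r > 0 \<Longrightarrow> (g has_real_derivative g' r) (at r)"
    and dg': "\<And>r. r > 0 \<Longrightarrow> (g' has_real_derivative g'' r) (at r)"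
    and ode: "\<And>r. r > 0 \<Longrightarrow> g'' r = eta r - lam * g r - 2 * m / r * g' r"
    and r: "r > 0"
  shows "(radial_energy lam m g g' has_real_derivative
      2 * (m * r powr m / r * g r + r powr m * g' r) * (r powr m * eta r)
      + 2 * m * (m - 1) / r^3 * (r powr m * g r)^2) (at r)"
proof -
  define P where "P r = r powr m" for r :: real
  define u where "u r = P r * g r" for r
  define ud where "ud r = m * P r / r * g r + P r * g' r" for r
  define udd where "udd r = m * (m - 1) / r^2 * u r + P r * eta r - lam * u r" for r
  have dP: "(P has_real_derivative m * P r / r) (at r)" if "r > 0" for r
    unfolding P_def using has_real_derivative_powr_div[OF that] .
  have du: "(u has_real_derivative ud r) (at r)" if "r > 0" for r
    unfolding u_def[abs_def] ud_def using that by (auto intro!: derivative_eq_intros dP dg)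
  have dud: "(ud has_real_derivative udd r) (at r)" if r: "r > 0" for r
  proof -
    have "(ud has_real_derivative
        (m * (m * P r / r) * r - m * P r * 1) / r^2 * g r + m * P r / r * g' r
          + (m * P r / r * g' r + P r * g'' r)) (at r)"
      unfolding ud_def[abs_def] using r
      by (auto intro!: derivative_eq_intros dP dg dg' simp: power2_eq_square field_simps)
    moreover have "(m * (m * P r / r) * r - m * P r * 1) / r^2 * g r + m * P r / r * g' r
          + (m * P r / r * g' r + P r * g'' r) = udd r"
      unfolding udd_def u_def ode[OF r] using r by (simp add: field_simps power2_eq_square)
    ultimately show ?thesis by simp
  qed
  have E: "radial_energy lam m g g' = (\<lambda>r. ud r^2 + (lam - m * (m - 1) / r^2) * u r^2)"
    by (simp add: radial_energy_def ud_def u_def P_def fun_eq_iff)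
  have D: "(radial_energy lam m g g' has_real_derivative
      2 * ud r * udd r + (2 * m * (m - 1) / r^3 * u r^2 + (lam - m * (m - 1) / r^2) * (2 * u r * ud r))) (at r)"
    unfolding E using r
    by (auto intro!: derivative_eq_intros du dud simp: power2_eq_square power3_eq_cube field_simps)
  have "2 * ud r * udd r + (2 * m * (m - 1) / r^3 * u r^2 + (lam - m * (m - 1) / r^2) * (2 * u r * ud r))
      = 2 * ud r * (P r * eta r) + 2 * m * (m - 1) / r^3 * u r^2"
    unfolding udd_def using r by (simp add: field_simps power2_eq_square)
  with D show ?thesis by (simp only: ud_def u_def P_def)
qed

lemma radial_energy_rate_le:
  fixes v u q c lam s w K :: real
  assumes lam: "lam > 0" and coef: "lam / 2 \<le> lam - c / s^2" and s: "s > 0"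
    and w: "1 / s^3 \<le> w" and q: "\<bar>q\<bar> \<le> K * w"
  shows "2 * v * q + 2 * c / s^3 * u^2 \<le> (1 + 4 * \<bar>c\<bar> / lam) * w * (v^2 + (lam - c / s^2) * u^2 + K^2)"
proof -
  define E where "E = v^2 + (lam - c / s^2) * u^2"
  have w0: "w \<ge> 0" using s w by (smt (verit) divide_pos_pos zero_less_power)
  have "lam / 2 * u^2 \<le> (lam - c / s^2) * u^2" by (rule mult_right_mono[OF coef]) simp
  moreover have "0 \<le> lam / 2 * u^2" using lam by simp
  moreover have "0 \<le> v^2" by simp
  ultimately have u2': "lam / 2 * u^2 \<le> E" and v2: "v^2 \<le> E" unfolding E_def by linarith+
  have u2: "u^2 \<le> 2 / lam * E" using u2' lam by (simp add: field_simps)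
  have "v * q \<le> \<bar>v\<bar> * \<bar>q\<bar>" by (metis abs_ge_self abs_mult)
  then have "2 * v * q \<le> 2 * (\<bar>v\<bar> * \<bar>q\<bar>)" by simp
  also have "\<dots> \<le> 2 * (\<bar>v\<bar> * (K * w))" using q by (intro mult_left_mono) auto
  also have "\<dots> = (2 * \<bar>v\<bar> * K) * w" by simp
  also have "\<dots> \<le> (v^2 + K^2) * w" \<comment> \<open>AM-GM\<close>
  proof (rule mult_right_mono[OF _ w0])
    have "0 \<le> (\<bar>v\<bar> - K)^2" by simp
    then show "2 * \<bar>v\<bar> * K \<le> v^2 + K^2" by (simp add: power2_eq_square algebra_simps)
  qed
  finally have t1: "2 * v * q \<le> (E + K^2) * w"
    using mult_right_mono[OF v2 w0] by (simp add: distrib_right)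
  have "c / s^3 \<le> \<bar>c\<bar> * (1 / s^3)" using s by (simp add: divide_right_mono)
  also have "\<dots> \<le> \<bar>c\<bar> * w" using w by (intro mult_left_mono) auto
  finally have "c / s^3 \<le> \<bar>c\<bar> * w" .
  then have "2 * c / s^3 * u^2 \<le> 2 * \<bar>c\<bar> * w * u^2"
    using mult_left_mono[of "c / s^3" "\<bar>c\<bar> * w" "2 * u^2"] by (simp add: algebra_simps)
  also have "\<dots> \<le> 2 * \<bar>c\<bar> * w * (2 / lam * E)"
    using u2 w0 by (intro mult_left_mono) auto
  finally have t2: "2 * c / s^3 * u^2 \<le> 4 * \<bar>c\<bar> / lam * E * w" by (simp add: ac_simps)
  have "0 \<le> 4 * \<bar>c\<bar> / lam * K^2 * w" using lam w0 by simp
  moreover have "(1 + 4 * \<bar>c\<bar> / lam) * w * (E + K^2)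
      = (E + K^2) * w + 4 * \<bar>c\<bar> / lam * E * w + 4 * \<bar>c\<bar> / lam * K^2 * w"
    by (simp add: algebra_simps add_divide_distrib)
  ultimately show ?thesis using t1 t2 unfolding E_def[symmetric] by linarith
qed

text \<open>Gronwall's inequality for the integrable rate \<open>s\<^sup>-\<^sup>1\<^sup>-\<^sup>\<delta>\<close>: the factor
  \<open>exp (a (R\<^sub>0\<^sup>-\<^sup>\<delta> - s\<^sup>-\<^sup>\<delta>)/\<delta>)\<close> stays bounded as \<open>s \<rightarrow> \<infinity>\<close>.\<close>
lemma powr_gronwall:
  fixes E E' :: "real \<Rightarrow> real" and a \<delta> K R0 r :: real
  assumes R0: "R0 \<ge> 1" and \<delta>: "\<delta> > 0" and a: "a \<ge> 0" and r: "R0 \<le> r"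
    and dE: "\<And>s. R0 \<le> s \<Longrightarrow> s \<le> r \<Longrightarrow> (E has_real_derivative E' s) (at s)"
    and rate: "\<And>s. R0 \<le> s \<Longrightarrow> s \<le> r \<Longrightarrow> E' s \<le> a * s powr (-1-\<delta>) * (E s + K)"
    and init: "0 \<le> E R0 + K"
  shows "E r + K \<le> exp (a / \<delta>) * (E R0 + K)"
proof -
  define A where "A s = a * (R0 powr (-\<delta>) - s powr (-\<delta>)) / \<delta>" for s
  define Z where "Z s = (E s + K) * exp (- A s)" for s
  have dA: "(A has_real_derivative a * s powr (-1-\<delta>)) (at s)" if "s > 0" for s
  proof -
    have "(A has_real_derivative a * (0 - (-\<delta>) * s powr (-\<delta> - 1)) / \<delta>) (at s)"
      unfolding A_def[abs_def] using that by (auto intro!: derivative_eq_intros)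
    moreover have "s powr (-\<delta> - 1) = s powr (-1 - \<delta>)" by (rule arg_cong[where f="(powr) s"]) simp
    ultimately show ?thesis using \<delta> by simp
  qed
  have "Z r \<le> Z R0"
  proof (rule DERIV_nonpos_imp_nonincreasing[OF r])
    fix s assume s: "R0 \<le> s" "s \<le> r"
    have "(Z has_real_derivative
        (E' s + 0) * exp (- A s) + (E s + K) * (exp (- A s) * (- (a * s powr (-1-\<delta>))))) (at s)"
      unfolding Z_def[abs_def] using s R0 by (auto intro!: derivative_eq_intros dE dA)
    moreover have "(E' s + 0) * exp (- A s) + (E s + K) * (exp (- A s) * (- (a * s powr (-1-\<delta>)))) \<le> 0"
      using mult_right_mono[OF rate[OF s], of "exp (- A s)"] by (simp add: algebra_simps)
    ultimately show "\<exists>y. (Z has_real_derivative y) (at s) \<and> y \<le> 0" by blast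
  qed
  then have "E r + K \<le> exp (A r) * (E R0 + K)"
    by (simp add: Z_def A_def exp_minus field_simps)
  also have "\<dots> \<le> exp (a / \<delta>) * (E R0 + K)"
  proof (intro mult_right_mono init)
    have "R0 powr (-\<delta>) \<le> 1" using powr_mono[of "-\<delta>" 0 R0] R0 \<delta> by simp
    then have "R0 powr (-\<delta>) - r powr (-\<delta>) \<le> 1" by (smt (verit) powr_ge_zero)
    then show "exp (A r) \<le> exp (a / \<delta>)"
      unfolding A_def using a \<delta> by (simp add: divide_right_mono mult_left_le)
  qed
  finally show ?thesis .
qed

lemma radial_energy_coefficient_ge:
  fixes lam c R0 s :: real
  assumes lam: "lam > 0" and R0: "R0 \<ge> 1" and cR0: "2 * \<bar>c\<bar> \<le> lam * R0" and s: "s \<ge> R0"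
  shows "lam / 2 \<le> lam - c / s^2"
proof -
  have "c / s^2 \<le> \<bar>c\<bar> / s^2" by (simp add: divide_right_mono)
  also have "\<dots> \<le> \<bar>c\<bar> / s" using s R0 by (intro divide_left_mono) (auto simp: power2_eq_square)
  also have "\<dots> \<le> \<bar>c\<bar> / R0" using s R0 by (intro divide_left_mono) auto
  also have "\<dots> \<le> lam / 2" using cR0 R0 by (simp add: divide_simps)
  finally show ?thesis by simp
qed

lemma radial_energy_growth:
  fixes g g' g'' eta :: "real \<Rightarrow> real" and lam m K R0 \<delta> r :: real
  assumes lam: "lam > 0" and R0: "R0 \<ge> 1" and cR0: "2 * \<bar>m * (m - 1)\<bar> \<le> lam * R0"
    and \<delta>: "0 < \<delta>" "\<delta> \<le> 2"
    and dg: "\<And>r. r > 0 \<Longrightarrow> (g has_real_derivative g' r) (at r)"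
    and dg': "\<And>r. r > 0 \<Longrightarrow> (g' has_real_derivative g'' r) (at r)"
    and ode: "\<And>r. r > 0 \<Longrightarrow> g'' r = eta r - lam * g r - 2 * m / r * g' r"
    and eta: "\<And>r. r \<ge> R0 \<Longrightarrow> \<bar>r powr m * eta r\<bar> \<le> K * r powr (-1-\<delta>)"
    and r: "r \<ge> R0"
  shows "radial_energy lam m g g' r + K^2
    \<le> exp ((1 + 4 * \<bar>m * (m - 1)\<bar> / lam) / \<delta>) * (radial_energy lam m g g' R0 + K^2)"
proof (rule powr_gronwall[OF R0 \<delta>(1) _ r has_real_derivative_radial_energy[OF dg dg' ode]])
  show "0 \<le> 1 + 4 * \<bar>m * (m - 1)\<bar> / lam" using lam by simp
  have "lam / 2 \<le> lam - m * (m - 1) / R0^2"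
    by (rule radial_energy_coefficient_ge[OF lam R0 cR0 order_refl])
  then show "0 \<le> radial_energy lam m g g' R0 + K^2"
    unfolding radial_energy_def using lam
    by (smt (verit) mult_nonneg_nonneg zero_le_power2 half_gt_zero)
  fix s assume s: "R0 \<le> s" "s \<le> r"
  have s1: "s \<ge> 1" using s R0 by simp
  have "s powr (-3) \<le> s powr (-1-\<delta>)" using s1 \<delta> by (intro powr_mono) auto
  then have "1 / s^3 \<le> s powr (-1-\<delta>)" using s1 by (simp add: powr_minus_divide powr_realpow)
  then show "2 * (m * s powr m / s * g s + s powr m * g' s) * (s powr m * eta s)
      + 2 * m * (m - 1) / s^3 * (s powr m * g s)^2
    \<le> (1 + 4 * \<bar>m * (m - 1)\<bar> / lam) * s powr (-1-\<delta>) * (radial_energy lam m g g' s + K^2)"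
    unfolding radial_energy_def
    using radial_energy_rate_le[OF lam radial_energy_coefficient_ge[OF lam R0 cR0 s(1)] _ _ eta[OF s(1)],
        where v = "m * s powr m / s * g s + s powr m * g' s" and u = "s powr m * g s"] s1
    by (simp add: mult.assoc)
qed (use R0 in auto)

lemma radial_energy_le:
  fixes g g' :: "real \<Rightarrow> real" and lam m r a b :: real
  assumes lam: "lam \<ge> 0" and r: "r \<ge> 1" and ga: "\<bar>g r\<bar> \<le> a" and gb: "\<bar>g' r\<bar> \<le> b"
  shows "radial_energy lam m g g' r \<le> (r powr m)^2 * ((\<bar>m\<bar> * a + b)^2 + (lam + \<bar>m * (m - 1)\<bar>) * a^2)"
proof -
  define P where "P = r powr m"
  have P: "P \<ge> 0" by (simp add: P_def)
  have "\<bar>m * P / r * g r + P * g' r\<bar> \<le> \<bar>m\<bar> * P / r * \<bar>g r\<bar> + P * \<bar>g' r\<bar>"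
    using P r abs_triangle_ineq[of "m * P / r * g r" "P * g' r"] by (simp add: abs_mult)
  also have "\<dots> \<le> \<bar>m\<bar> * P * \<bar>g r\<bar> + P * \<bar>g' r\<bar>"
  proof (intro add_right_mono mult_right_mono)
    have "0 \<le> \<bar>m\<bar> * P" using P by simp
    then show "\<bar>m\<bar> * P / r \<le> \<bar>m\<bar> * P" using r by (simp add: divide_le_eq mult_le_cancel_left1)
  qed simp
  also have "\<dots> \<le> \<bar>m\<bar> * P * a + P * b"
    using P ga gb by (intro add_mono mult_left_mono) auto
  also have "\<dots> = P * (\<bar>m\<bar> * a + b)" by (simp add: algebra_simps)
  finally have "(m * P / r * g r + P * g' r)^2 \<le> (P * (\<bar>m\<bar> * a + b))^2"
    by (rule power2_le_iff_abs_le[THEN iffD2, rotated]) (use P ga gb in \<open>simp add: algebra_simps\<close>)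
  moreover have "(lam - m * (m - 1) / r^2) * (P * g r)^2 \<le> (lam + \<bar>m * (m - 1)\<bar>) * (P * a)^2"
  proof (rule mult_mono)
    have "- (m * (m - 1) / r^2) \<le> \<bar>m * (m - 1)\<bar> / r^2"
      unfolding minus_divide_left by (intro divide_right_mono) auto
    also have "\<dots> \<le> \<bar>m * (m - 1)\<bar>" using r by (simp add: divide_le_eq mult_le_cancel_left1 one_le_power)
    finally show "lam - m * (m - 1) / r^2 \<le> lam + \<bar>m * (m - 1)\<bar>" by simp
    have "\<bar>P * g r\<bar> \<le> P * a" using P ga by (simp add: abs_mult mult_left_mono)
    then show "(P * g r)^2 \<le> (P * a)^2" by (rule power2_le_iff_abs_le[THEN iffD2, rotated]) (use P ga in simp)
  qed (use lam in auto)
  ultimately have "radial_energy lam m g g' r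
      \<le> (P * (\<bar>m\<bar> * a + b))^2 + (lam + \<bar>m * (m - 1)\<bar>) * (P * a)^2"
    unfolding radial_energy_def P_def[symmetric] by (rule add_mono)
  also have "\<dots> = P^2 * ((\<bar>m\<bar> * a + b)^2 + (lam + \<bar>m * (m - 1)\<bar>) * a^2)"
    by (simp add: power2_eq_square algebra_simps)
  finally show ?thesis by (simp add: P_def)
qed

lemma radial_far_field_bound:
  fixes g g' :: "real \<Rightarrow> real" and lam m R0 X K r :: real
  assumes lam: "lam > 0" and R0: "R0 \<ge> 1" and cR0: "2 * \<bar>m * (m - 1)\<bar> \<le> lam * R0"
    and r: "r \<ge> R0" and K: "K \<ge> 0" and E: "radial_energy lam m g g' r \<le> X * K^2"
  shows "r powr m * \<bar>g r\<bar> \<le> sqrt (2 * X / lam) * K"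
    and "r powr m * \<bar>g' r\<bar> \<le> (sqrt X + \<bar>m\<bar> * sqrt (2 * X / lam)) * K"
proof -
  define u where "u = r powr m * g r"
  define v where "v = m * r powr m / r * g r + r powr m * g' r"
  have r1: "r \<ge> 1" using r R0 by simp
  have "lam / 2 \<le> lam - m * (m - 1) / r^2" by (rule radial_energy_coefficient_ge[OF lam R0 cR0 r])
  then have "lam / 2 * u^2 \<le> (lam - m * (m - 1) / r^2) * u^2" by (rule mult_right_mono) simp
  moreover have "radial_energy lam m g g' r = v^2 + (lam - m * (m - 1) / r^2) * u^2"
    by (simp add: radial_energy_def u_def v_def)
  moreover have "0 \<le> lam / 2 * u^2" "0 \<le> v^2" using lam by simp_all
  ultimately have u2: "lam / 2 * u^2 \<le> X * K^2" and "v^2 \<le> X * K^2" using E by linarith+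
  then have v: "\<bar>v\<bar> \<le> sqrt (X * K^2)" by (intro real_le_rsqrt) simp
  have "u^2 \<le> 2 * X / lam * K^2" using u2 lam by (simp add: field_simps)
  then have "\<bar>u\<bar> \<le> sqrt (2 * X / lam * K^2)" by (intro real_le_rsqrt) simp
  also have "\<dots> = sqrt (2 * X / lam) * K" using K by (simp only: real_sqrt_mult real_sqrt_abs abs_of_nonneg)
  finally show g: "r powr m * \<bar>g r\<bar> \<le> sqrt (2 * X / lam) * K" by (simp add: u_def abs_mult)
  \<comment> \<open>\<open>r\<^sup>m g' = v - m r\<^sup>m\<^sup>-\<^sup>1 g\<close>\<close>
  have "\<bar>m * r powr m / r * g r\<bar> = \<bar>m\<bar> * (r powr m * \<bar>g r\<bar>) / r"
    using r1 by (simp add: abs_mult)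
  also have "\<dots> \<le> \<bar>m\<bar> * (r powr m * \<bar>g r\<bar>)"
    using divide_left_mono[of 1 r "\<bar>m\<bar> * (r powr m * \<bar>g r\<bar>)"] r1 by simp
  also have "\<dots> \<le> \<bar>m\<bar> * (sqrt (2 * X / lam) * K)" using g by (intro mult_left_mono) auto
  finally have "\<bar>r powr m * g' r\<bar> \<le> sqrt X * K + \<bar>m\<bar> * (sqrt (2 * X / lam) * K)"
    using v K abs_triangle_ineq4[of v "m * r powr m / r * g r"]
    by (simp add: v_def real_sqrt_mult)
  then show "r powr m * \<bar>g' r\<bar> \<le> (sqrt X + \<bar>m\<bar> * sqrt (2 * X / lam)) * K"
    by (simp add: abs_mult algebra_simps)
qed

lemma one_plus_powr_mult_le_max:
  fixes m R0 r x a b :: real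
  assumes m: "m \<ge> 0" and R0: "R0 \<ge> 1" and r: "r \<ge> 0" and x: "x \<ge> 0"
    and near: "r \<le> R0 \<Longrightarrow> x \<le> a" and far: "R0 \<le> r \<Longrightarrow> r powr m * x \<le> b"
  shows "(1 + r) powr m * x \<le> max ((1 + R0) powr m * a) (2 powr m * b)"
proof (cases "r \<le> R0")
  case True
  have "(1 + r) powr m * x \<le> (1 + R0) powr m * a"
    using True r m x near by (intro mult_mono powr_mono2) auto
  then show ?thesis by linarith
next
  case False
  then have "(1 + r) powr m \<le> 2 powr m * r powr m"
    using R0 m powr_mono2[of m "1 + r" "2 * r"] by (simp add: powr_mult)
  then have "(1 + r) powr m * x \<le> 2 powr m * (r powr m * x)"
    using x by (metis mult.assoc mult_right_mono)
  also have "\<dots> \<le> 2 powr m * b" using False far by (intro mult_left_mono) auto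
  finally show ?thesis by linarith
qed

lemma radial_energy_far_le:
  fixes g g' g'' eta :: "real \<Rightarrow> real" and lam m K R0 \<delta> a b r :: real
  assumes lam: "lam > 0" and R0: "R0 \<ge> 1" and cR0: "2 * \<bar>m * (m - 1)\<bar> \<le> lam * R0"
    and \<delta>: "0 < \<delta>" "\<delta> \<le> 2"
    and dg: "\<And>r. r > 0 \<Longrightarrow> (g has_real_derivative g' r) (at r)"
    and dg': "\<And>r. r > 0 \<Longrightarrow> (g' has_real_derivative g'' r) (at r)"
    and ode: "\<And>r. r > 0 \<Longrightarrow> g'' r = eta r - lam * g r - 2 * m / r * g' r"
    and eta: "\<And>r. r \<ge> R0 \<Longrightarrow> \<bar>r powr m * eta r\<bar> \<le> K * r powr (-1-\<delta>)"
    and ga: "\<bar>g R0\<bar> \<le> a * K" and gb: "\<bar>g' R0\<bar> \<le> b * K" and r: "r \<ge> R0"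
  shows "radial_energy lam m g g' r \<le> exp ((1 + 4 * \<bar>m * (m - 1)\<bar> / lam) / \<delta>)
    * ((R0 powr m)^2 * ((\<bar>m\<bar> * a + b)^2 + (lam + \<bar>m * (m - 1)\<bar>) * a^2) + 1) * K^2"
proof -
  define X0 where "X0 = (R0 powr m)^2 * ((\<bar>m\<bar> * a + b)^2 + (lam + \<bar>m * (m - 1)\<bar>) * a^2)"
  have "radial_energy lam m g g' R0 \<le> (R0 powr m)^2
      * ((\<bar>m\<bar> * (a * K) + b * K)^2 + (lam + \<bar>m * (m - 1)\<bar>) * (a * K)^2)"
    using lam R0 ga gb by (intro radial_energy_le) auto
  also have "\<dots> = X0 * K^2" by (simp add: X0_def power2_eq_square algebra_simps)
  finally have "radial_energy lam m g g' R0 + K^2 \<le> (X0 + 1) * K^2" by (simp add: algebra_simps)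
  then have "radial_energy lam m g g' r + K^2
      \<le> exp ((1 + 4 * \<bar>m * (m - 1)\<bar> / lam) / \<delta>) * ((X0 + 1) * K^2)"
    using radial_energy_growth[OF lam R0 cR0 \<delta> dg dg' ode eta r] by (smt (verit) exp_gt_zero mult_left_mono)
  then show ?thesis using zero_le_power2[of K] unfolding X0_def[symmetric] mult.assoc by linarith
qed

lemma abs_powr_mult_le_of_decay:
  fixes eta :: "real \<Rightarrow> real" and K \<beta> m \<delta> r :: real
  assumes decay: "\<bar>eta r\<bar> \<le> K * (1 + r) powr (-\<beta>)" and K: "K \<ge> 0" and \<beta>: "\<beta> \<ge> 0"
    and r: "r \<ge> 1" and m: "m - \<beta> \<le> -1 - \<delta>"
  shows "\<bar>r powr m * eta r\<bar> \<le> K * r powr (-1-\<delta>)"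
proof -
  have "\<bar>eta r\<bar> \<le> K * r powr (-\<beta>)"
    using decay mult_left_mono[OF powr_mono2'[of "-\<beta>" r "1 + r"] K] r \<beta> by simp
  then have "\<bar>r powr m * eta r\<bar> \<le> r powr m * (K * r powr (-\<beta>))"
    by (simp add: abs_mult mult_left_mono)
  also have "\<dots> = K * r powr (m - \<beta>)" using r by (simp add: powr_add[symmetric])
  also have "\<dots> \<le> K * r powr (-1-\<delta>)" using K r m by (intro mult_left_mono powr_mono) auto
  finally show ?thesis .
qed

lemma radial_solution_weighted_bounds:
  fixes N :: nat and lam \<beta> K R0 a b r :: real and eta g g' g'' :: "real \<Rightarrow> real"
  defines "m \<equiv> (real N - 1) / 2"
  defines "\<delta> \<equiv> min 1 (\<beta> - m - 1)"
  defines "X \<equiv> exp ((1 + 4 * \<bar>m * (m - 1)\<bar> / lam) / \<delta>)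
    * ((R0 powr m)^2 * ((\<bar>m\<bar> * a + b)^2 + (lam + \<bar>m * (m - 1)\<bar>) * a^2) + 1)"
  assumes lam: "lam > 0" and N: "N \<ge> 2" and \<beta>: "\<beta> > (real N + 1) / 2"
    and sol: "radial_solution N lam eta g g' g''"
    and K: "K \<ge> 0" and decay: "\<And>s. s \<ge> 0 \<Longrightarrow> \<bar>eta s\<bar> \<le> K * (1 + s) powr (-\<beta>)"
    and R0: "R0 \<ge> 1" and cR0: "2 * \<bar>m * (m - 1)\<bar> \<le> lam * R0"
    and g_near: "\<And>s. 0 \<le> s \<Longrightarrow> s \<le> R0 \<Longrightarrow> \<bar>g s\<bar> \<le> a * K"
    and g'_near: "\<And>s. 0 \<le> s \<Longrightarrow> s \<le> R0 \<Longrightarrow> \<bar>g' s\<bar> \<le> b * K"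
    and r: "r \<ge> 0"
  shows "(1 + r) powr m * \<bar>g r\<bar> \<le> max ((1 + R0) powr m * a) (2 powr m * sqrt (2 * X / lam)) * K"
    and "(1 + r) powr m * \<bar>g' r\<bar>
      \<le> max ((1 + R0) powr m * b) (2 powr m * (sqrt X + \<bar>m\<bar> * sqrt (2 * X / lam))) * K"
proof -
  have m: "m \<ge> 0" using N by (simp add: m_def)
  have \<delta>: "0 < \<delta>" "\<delta> \<le> 2" "m - \<beta> \<le> -1 - \<delta>"
    using \<beta> unfolding \<delta>_def m_def by (auto simp: field_simps min_def)
  have dg: "\<And>r. r > 0 \<Longrightarrow> (g has_real_derivative g' r) (at r)"
    and dg': "\<And>r. r > 0 \<Longrightarrow> (g' has_real_derivative g'' r) (at r)"
    using sol by (auto simp: radial_solution_def)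
  have ode: "g'' r = eta r - lam * g r - 2 * m / r * g' r" if "r > 0" for r
  proof -
    have "g'' r + (real N - 1) / r * g' r + lam * g r = eta r"
      using sol that unfolding radial_solution_def by blast
    moreover have "real N - 1 = 2 * m" by (simp add: m_def)
    ultimately show ?thesis by simp
  qed
  have eta_far: "\<bar>r powr m * eta r\<bar> \<le> K * r powr (-1-\<delta>)" if "r \<ge> R0" for r
    using \<beta> \<delta>(3) that R0 decay[of r] by (intro abs_powr_mult_le_of_decay K) auto
  have "radial_energy lam m g g' s \<le> X * K^2" if "s \<ge> R0" for s
    unfolding X_def
    by (rule radial_energy_far_le[OF lam R0 cR0 \<delta>(1,2) dg dg' ode eta_far _ _ that])
       (use g_near g'_near R0 in auto)
  note far = radial_far_field_bound[OF lam R0 cR0 _ K this]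
  have "(1 + r) powr m * \<bar>g r\<bar> \<le> max ((1 + R0) powr m * (a * K)) (2 powr m * (sqrt (2 * X / lam) * K))"
    using g_near far(1) r by (intro one_plus_powr_mult_le_max[OF m R0 r abs_ge_zero]) auto
  then show "(1 + r) powr m * \<bar>g r\<bar> \<le> max ((1 + R0) powr m * a) (2 powr m * sqrt (2 * X / lam)) * K"
    using K by (simp add: max_mult_distrib_right mult.assoc)
  have "(1 + r) powr m * \<bar>g' r\<bar>
      \<le> max ((1 + R0) powr m * (b * K)) (2 powr m * ((sqrt X + \<bar>m\<bar> * sqrt (2 * X / lam)) * K))"
    using g'_near far(2) r by (intro one_plus_powr_mult_le_max[OF m R0 r abs_ge_zero]) auto
  then show "(1 + r) powr m * \<bar>g' r\<bar>
      \<le> max ((1 + R0) powr m * b) (2 powr m * (sqrt X + \<bar>m\<bar> * sqrt (2 * X / lam))) * K"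
    using K by (simp add: max_mult_distrib_right mult.assoc)
qed

text \<open>Near the origin the exponential bounds of the Volterra solution suffice; beyond
  \<open>R\<^sub>0\<close>, where \<open>\<lambda> - m(m - 1)/r\<^sup>2 \<ge> \<lambda>/2\<close>, the energy of \<open>r\<^sup>m g\<close> stays bounded.\<close>
lemma radial_ode_decaying_solution:
  fixes lam \<beta> :: real and N :: nat
  assumes lam: "lam > 0" and N: "N \<ge> 2" and \<beta>: "\<beta> > (real N + 1) / 2"
  defines "m \<equiv> (real N - 1) / 2"
  shows "\<exists>D1 D2. \<forall>eta K. continuous_on UNIV eta \<longrightarrow> K \<ge> 0 \<longrightarrow>
     (\<forall>s\<ge>0. \<bar>eta s\<bar> \<le> K * (1 + s) powr (-\<beta>)) \<longrightarrow>
     (\<exists>g g' g''. radial_solution N lam eta g g' g''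
        \<and> (\<forall>r\<ge>0. (1 + r) powr m * \<bar>g r\<bar> \<le> D1 * K)
        \<and> (\<forall>r\<ge>0. (1 + r) powr m * \<bar>g' r\<bar> \<le> D2 * K))"
proof -
  define M where "M = sqrt (2 * lam)"
  define R0 where "R0 = 1 + 2 * \<bar>m * (m - 1)\<bar> / lam"
  define a where "a = 2 / lam * exp (M * R0)"
  define b where "b = R0 + 2 * exp (M * R0) / M"
  define X where "X = exp ((1 + 4 * \<bar>m * (m - 1)\<bar> / lam) / min 1 (\<beta> - m - 1))
    * ((R0 powr m)^2 * ((\<bar>m\<bar> * a + b)^2 + (lam + \<bar>m * (m - 1)\<bar>) * a^2) + 1)"
  have R0: "R0 \<ge> 1" "2 * \<bar>m * (m - 1)\<bar> \<le> lam * R0"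
    using lam by (auto simp: R0_def field_simps)
  { fix eta :: "real \<Rightarrow> real" and K :: real
    assume eta: "continuous_on UNIV eta" and K: "K \<ge> 0"
      and decay: "\<forall>s\<ge>0. \<bar>eta s\<bar> \<le> K * (1 + s) powr (-\<beta>)"
    have "\<bar>eta s\<bar> \<le> K" if "s \<ge> 0" for s
    proof -
      have "(1 + s) powr (-\<beta>) \<le> 1" using that \<beta> powr_mono[of "-\<beta>" 0 "1 + s"] by simp
      then show ?thesis using decay that K by (meson mult_left_le order.trans)
    qed
    moreover have "N \<ge> 1" "R0 \<ge> 0" using N R0 by auto
    ultimately obtain g g' g'' where sol: "radial_solution N lam eta g g' g''"
      and near: "\<forall>s\<in>{0..R0}. \<bar>g s\<bar> \<le> a * K" "\<forall>s\<in>{0..R0}. \<bar>g' s\<bar> \<le> b * K"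
      using radial_ode_solvable[OF _ lam eta K] unfolding a_def b_def M_def by blast
    note bounds = radial_solution_weighted_bounds[where a = a and b = b,
        OF lam N \<beta> sol K _ R0[unfolded m_def], folded m_def, folded X_def]
    have "\<exists>g g' g''. radial_solution N lam eta g g' g''
        \<and> (\<forall>r\<ge>0. (1 + r) powr m * \<bar>g r\<bar> \<le> max ((1 + R0) powr m * a) (2 powr m * sqrt (2 * X / lam)) * K)
        \<and> (\<forall>r\<ge>0. (1 + r) powr m * \<bar>g' r\<bar>
          \<le> max ((1 + R0) powr m * b) (2 powr m * (sqrt X + \<bar>m\<bar> * sqrt (2 * X / lam))) * K)"
      using sol near decay bounds
      by - (rule exI[of _ g], rule exI[of _ g'], rule exI[of _ g''], simp) }
  then show ?thesis by blast
qed

section \<open>Weighted Hoelder norms\<close>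

lemma holder_norm_ge:
  fixes f :: "'a::metric_space \<Rightarrow> real"
  assumes "x \<in> B" and "z \<in> B" and "x \<noteq> z"
  shows "ereal (\<bar>f x\<bar> + \<bar>f x - f z\<bar> / dist x z powr \<alpha>) \<le> holder_norm \<alpha> B f"
proof -
  have "ereal \<bar>f x\<bar> \<le> (SUP x\<in>B. ereal \<bar>f x\<bar>)" using assms by (intro SUP_upper)
  moreover have "ereal (\<bar>f x - f z\<bar> / dist x z powr \<alpha>) \<le>
     (SUP p\<in>{(x, z). x \<in> B \<and> z \<in> B \<and> x \<noteq> z}. ereal (\<bar>f (fst p) - f (snd p)\<bar> / dist (fst p) (snd p) powr \<alpha>))"
    using assms by (intro SUP_upper2[of "(x, z)"]) auto
  ultimately show ?thesis unfolding holder_norm_def plus_ereal.simps(1)[symmetric] by (rule add_mono)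
qed

lemma holder_norm_le:
  fixes f :: "'a::metric_space \<Rightarrow> real"
  assumes "\<And>x. x \<in> B \<Longrightarrow> \<bar>f x\<bar> \<le> A"
    and "\<And>x z. x \<in> B \<Longrightarrow> z \<in> B \<Longrightarrow> x \<noteq> z \<Longrightarrow> \<bar>f x - f z\<bar> / dist x z powr \<alpha> \<le> L"
  shows "holder_norm \<alpha> B f \<le> ereal (A + L)"
  unfolding holder_norm_def plus_ereal.simps(1)[symmetric]
  using assms by (intro add_mono SUP_least) auto

lemma wnorm_nonneg:
  fixes f :: "'a::euclidean_space \<Rightarrow> real"
  shows "0 \<le> wnorm \<alpha> \<beta> f"
proof -
  obtain b :: 'a where "norm b = 1" using norm_Basis nonempty_Basis by blast
  then have "ereal (\<bar>W 0\<bar> + \<bar>W 0 - W (b /\<^sub>R 2)\<bar> / dist 0 (b /\<^sub>R 2) powr \<alpha>) \<le> holder_norm \<alpha> (ball 0 1) W"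
    for W :: "'a \<Rightarrow> real"
    by (intro holder_norm_ge) auto
  then have "0 \<le> holder_norm \<alpha> (ball 0 1) (\<lambda>x. (1 + norm x) powr \<beta> * f x)"
    by (rule order.trans[rotated]) simp
  also have "\<dots> \<le> wnorm \<alpha> \<beta> f" unfolding wnorm_def by (rule SUP_upper) simp
  finally show ?thesis .
qed

lemma wnorm_le_imp_holder:
  fixes f :: "'a::euclidean_space \<Rightarrow> real"
  assumes bound: "wnorm \<alpha> \<beta> f \<le> ereal K"
  defines "W \<equiv> \<lambda>x. (1 + norm x) powr \<beta> * f x"
  shows "\<bar>W x\<bar> \<le> K" and "dist z x < 1 \<Longrightarrow> \<bar>W z - W x\<bar> \<le> K * dist z x powr \<alpha>"
proof -
  have pt: "\<bar>W x\<bar> + \<bar>W x - W z\<bar> / dist x z powr \<alpha> \<le> K" if "dist x z < 1" "x \<noteq> z" for x z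
  proof -
    have "ereal (\<bar>W x\<bar> + \<bar>W x - W z\<bar> / dist x z powr \<alpha>) \<le> holder_norm \<alpha> (ball x 1) W"
      using that by (intro holder_norm_ge) auto
    also have "\<dots> \<le> wnorm \<alpha> \<beta> f" unfolding wnorm_def W_def by (rule SUP_upper) simp
    also note bound
    finally show ?thesis by simp
  qed
  obtain b :: 'a where "norm b = 1" using norm_Basis nonempty_Basis by blast
  then have "\<bar>W x\<bar> + \<bar>W x - W (x + b /\<^sub>R 2)\<bar> / dist x (x + b /\<^sub>R 2) powr \<alpha> \<le> K"
    by (intro pt) (auto simp: dist_norm)
  then show "\<bar>W x\<bar> \<le> K" by (smt (verit) divide_nonneg_nonneg abs_ge_zero powr_ge_zero)
  assume "dist z x < 1"
  show "\<bar>W z - W x\<bar> \<le> K * dist z x powr \<alpha>"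
  proof (cases "z = x")
    case False
    then have "\<bar>W x - W z\<bar> / dist x z powr \<alpha> \<le> K" and "0 < dist x z powr \<alpha>"
      using pt[of x z] \<open>dist z x < 1\<close> by (auto simp: dist_commute)
    then show ?thesis by (simp add: divide_le_eq dist_commute abs_minus_commute)
  qed simp
qed

lemma isCont_if_holder:
  fixes W :: "'a::real_normed_vector \<Rightarrow> real"
  assumes h: "\<And>z. dist z x < 1 \<Longrightarrow> \<bar>W z - W x\<bar> \<le> K * dist z x powr \<alpha>" and \<alpha>: "\<alpha> > 0"
  shows "isCont W x"
proof -
  have "((\<lambda>z. dist z x) \<longlongrightarrow> 0) (at x)"
    using tendsto_dist[OF tendsto_ident_at tendsto_const, of x x] by simp
  then have "((\<lambda>z. K * dist z x powr \<alpha>) \<longlongrightarrow> 0) (at x)"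
    using tendsto_mult_right_zero tendsto_zero_powrI[OF _ tendsto_const _ \<alpha>] by force
  moreover have "\<forall>\<^sub>F z in at x. norm (W z - W x) \<le> K * dist z x powr \<alpha>"
    unfolding eventually_at by (rule exI[of _ 1]) (auto intro: h)
  ultimately have "((\<lambda>z. W z - W x) \<longlongrightarrow> 0) (at x)" by (rule Lim_null_comparison[rotated])
  then show ?thesis unfolding isCont_def by (rule LIM_zero_cancel)
qed

lemma continuous_on_if_wnorm_finite:
  fixes f :: "'a::euclidean_space \<Rightarrow> real"
  assumes "wnorm \<alpha> \<beta> f < \<infinity>" and "\<alpha> > 0"
  shows "continuous_on UNIV f"
proof -
  obtain K where K: "wnorm \<alpha> \<beta> f \<le> ereal K"
    using assms(1) by (cases "wnorm \<alpha> \<beta> f") auto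
  define W where "W x = (1 + norm x) powr \<beta> * f x" for x
  have "continuous_on UNIV W"
    by (intro continuous_at_imp_continuous_on ballI isCont_if_holder[where K = K, OF _ assms(2)] wnorm_le_imp_holder[OF K,
          folded W_def])
  then have "continuous_on UNIV (\<lambda>x. W x / (1 + norm x) powr \<beta>)"
    by (intro continuous_intros) (auto simp: add_nonneg_eq_0_iff)
  moreover have "W x / (1 + norm x) powr \<beta> = f x" for x
    using add_pos_nonneg[OF zero_less_one norm_ge_zero, of x] by (simp add: W_def)
  ultimately show ?thesis by simp
qed

lemma abs_weighted_diff_le:
  fixes g g' :: "real \<Rightarrow> real" and m A B a b :: real
  assumes gc: "continuous_on UNIV g"
    and dg: "\<And>r. r > 0 \<Longrightarrow> (g has_real_derivative g' r) (at r)"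
    and gA: "\<And>r. r \<ge> 0 \<Longrightarrow> (1 + r) powr m * \<bar>g r\<bar> \<le> A"
    and g'B: "\<And>r. r \<ge> 0 \<Longrightarrow> (1 + r) powr m * \<bar>g' r\<bar> \<le> B"
    and m: "m \<ge> 0" and a: "0 \<le> a" and ab: "a \<le> b"
  shows "\<bar>(1 + b) powr m * g b - (1 + a) powr m * g a\<bar> \<le> (m * A + B) * (b - a)"
proof (cases "a = b")
  case False
  define G where "G r = (1 + r) powr m * g r" for r
  have dG: "(G has_real_derivative m * (1 + r) powr (m - 1) * g r + (1 + r) powr m * g' r) (at r)"
    if "r > 0" for r
    unfolding G_def[abs_def] using that by (auto intro!: derivative_eq_intros dg)
  have "continuous_on {a..b} G" unfolding G_def[abs_def] using a
    by (intro continuous_intros continuous_on_subset[OF gc]) auto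
  moreover have "G differentiable (at x)" if "a < x" "x < b" for x
    using dG[of x] that a by (auto simp: real_differentiable_def)
  ultimately obtain l z where z: "a < z" "z < b" and dz: "(G has_real_derivative l) (at z)"
    and eq: "G b - G a = (b - a) * l"
    using MVT[of a b G] False ab by auto
  have z0: "z > 0" using z a by simp
  have "\<bar>l\<bar> \<le> m * (1 + z) powr (m - 1) * \<bar>g z\<bar> + (1 + z) powr m * \<bar>g' z\<bar>"
    unfolding DERIV_unique[OF dz dG[OF z0]] using m z0
    by (auto simp: abs_mult intro: order.trans[OF abs_triangle_ineq])
  also have "\<dots> \<le> m * ((1 + z) powr m * \<bar>g z\<bar>) + (1 + z) powr m * \<bar>g' z\<bar>"
  proof -
    have "(1 + z) powr (m - 1) \<le> (1 + z) powr m" using z0 by (intro powr_mono) auto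
    then show ?thesis using m by (simp add: mult.assoc mult_left_mono mult_right_mono)
  qed
  also have "\<dots> \<le> m * A + B" using gA[of z] g'B[of z] z0 m by (intro add_mono mult_left_mono) auto
  finally have "\<bar>l\<bar> \<le> m * A + B" .
  then have "(b - a) * \<bar>l\<bar> \<le> (b - a) * (m * A + B)" using ab by (intro mult_left_mono) auto
  then show ?thesis using eq ab by (simp add: G_def abs_mult mult.commute)
qed simp

lemma wnorm_radial_le:
  fixes g g' :: "real \<Rightarrow> real" and m A B \<alpha> :: real
  assumes gc: "continuous_on UNIV g"
    and dg: "\<And>r. r > 0 \<Longrightarrow> (g has_real_derivative g' r) (at r)"
    and gA: "\<And>r. r \<ge> 0 \<Longrightarrow> (1 + r) powr m * \<bar>g r\<bar> \<le> A"
    and g'B: "\<And>r. r \<ge> 0 \<Longrightarrow> (1 + r) powr m * \<bar>g' r\<bar> \<le> B"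
    and m: "m \<ge> 0" and \<alpha>: "0 < \<alpha>" "\<alpha> \<le> 1"
  shows "wnorm \<alpha> m (\<lambda>y::'a::real_normed_vector. g (norm y)) \<le> ereal (A + 2 * (m * A + B))"
proof -
  define L where "L = m * A + B"
  have L: "L \<ge> 0" using gA[of 0] g'B[of 0] m by (simp add: L_def)
  have lip: "\<bar>(1 + s) powr m * g s - (1 + t) powr m * g t\<bar> \<le> L * \<bar>s - t\<bar>" if "s \<ge> 0" "t \<ge> 0" for s t
    using abs_weighted_diff_le[OF gc dg gA g'B m, of s t] abs_weighted_diff_le[OF gc dg gA g'B m, of t s] that
    by (cases "s \<le> t") (auto simp: L_def abs_minus_commute)
  define H where "H x = (1 + norm x) powr m * g (norm x)" for x :: 'a
  have "holder_norm \<alpha> (ball y 1) H \<le> ereal (A + 2 * L)" for y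
  proof (rule holder_norm_le)
    show "\<bar>H x\<bar> \<le> A" for x using gA[of "norm x"] by (simp add: H_def abs_mult)
    fix x z assume "x \<in> ball y 1" "z \<in> ball y 1" "x \<noteq> z"
    then have d: "0 < dist x z" "dist x z < 2" using dist_triangle[of x z y] by (auto simp: dist_commute)
    have "\<bar>H x - H z\<bar> \<le> L * dist x z"
      using lip[of "norm x" "norm z"] L norm_triangle_ineq3[of x z]
      by (auto simp: H_def dist_norm intro: order.trans mult_left_mono)
    then have "\<bar>H x - H z\<bar> / dist x z powr \<alpha> \<le> L * (dist x z / dist x z powr \<alpha>)"
      using d by (simp add: divide_right_mono)
    also have "\<dots> = L * dist x z powr (1 - \<alpha>)" using d by (simp add: powr_diff)
    also have "\<dots> \<le> L * 2"
      using d \<alpha> L powr_mono2[of "1 - \<alpha>" "dist x z" 2] powr_mono[of "1 - \<alpha>" 1 2]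
      by (intro mult_left_mono) auto
    finally show "\<bar>H x - H z\<bar> / dist x z powr \<alpha> \<le> 2 * L" by (simp add: mult.commute)
  qed
  then show ?thesis unfolding wnorm_def L_def H_def by (intro SUP_least) simp
qed

lemma Sbar_radial_profile:
  fixes \<eta> :: "'a::euclidean_space \<Rightarrow> real" and b :: 'a
  assumes \<eta>: "\<eta> \<in> Sbar \<alpha> \<beta>" and \<alpha>: "\<alpha> > 0" and b: "norm b = 1"
  obtains K where "wnorm \<alpha> \<beta> \<eta> = ereal K" and "K \<ge> 0"
    and "continuous_on UNIV (\<lambda>s. \<eta> (s *\<^sub>R b))"
    and "\<And>s. s \<ge> 0 \<Longrightarrow> \<bar>\<eta> (s *\<^sub>R b)\<bar> \<le> K * (1 + s) powr (-\<beta>)"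
    and "\<And>y. \<eta> y = \<eta> (norm y *\<^sub>R b)"
proof -
  have fin: "wnorm \<alpha> \<beta> \<eta> < \<infinity>" using \<eta> by (simp add: Sbar_def)
  then obtain K where K: "wnorm \<alpha> \<beta> \<eta> = ereal K" "K \<ge> 0"
    using wnorm_nonneg[of \<alpha> \<beta> \<eta>] by (cases "wnorm \<alpha> \<beta> \<eta>") auto
  have "continuous_on UNIV (\<lambda>s. \<eta> (s *\<^sub>R b))"
    by (rule continuous_on_compose2[OF continuous_on_if_wnorm_finite[OF fin \<alpha>]]) (auto intro!: continuous_intros)
  moreover have "\<bar>\<eta> (s *\<^sub>R b)\<bar> \<le> K * (1 + s) powr (-\<beta>)" if s: "s \<ge> 0" for s
  proof -
    have "(1 + s) powr \<beta> * \<bar>\<eta> (s *\<^sub>R b)\<bar> \<le> K"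
      using wnorm_le_imp_holder(1)[of \<alpha> \<beta> \<eta> K "s *\<^sub>R b"] K b s by (simp add: abs_mult)
    then show ?thesis using s by (simp add: powr_minus field_simps)
  qed
  moreover have "radial \<eta>" using \<eta> by (simp add: Sbar_def)
  then have "\<eta> y = \<eta> (norm y *\<^sub>R b)" for y
    by (rule radial_def[THEN iffD1, rule_format]) (simp add: b)
  ultimately show thesis using that K by blast
qed

theorem lemma4:
  fixes lam \<alpha> \<beta> :: real
  assumes "DIM('a::euclidean_space) \<ge> 2" and "lam > 0" and "0 < \<alpha>" and "\<alpha> < 1"
    and "\<beta> > (real DIM('a) + 1) / 2"
  shows "\<exists>C::real. \<forall>\<eta>::'a \<Rightarrow> real. \<eta> \<in> Sbar \<alpha> \<beta> \<longrightarrow>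
     (\<exists>(h::'a \<Rightarrow> real) g g' g''. h \<in> Sbar \<alpha> ((real DIM('a) - 1) / 2)
        \<and> (\<forall>y. h y = g (norm y))
        \<and> (\<forall>r>0. (g has_real_derivative g' r) (at r) \<and> (g' has_real_derivative g'' r) (at r))
        \<and> (\<forall>y. y \<noteq> 0 \<longrightarrow>
              g'' (norm y) + (real DIM('a) - 1) / norm y * g' (norm y) + lam * g (norm y) = \<eta> y)
        \<and> wnorm \<alpha> ((real DIM('a) - 1) / 2) h \<le> ereal C * wnorm \<alpha> \<beta> \<eta>)"
proof -
  note N = assms(1) and lam = assms(2) and \<alpha> = assms(3,4) and \<beta> = assms(5)
  define m where "m = (real DIM('a) - 1) / 2"
  have m: "m \<ge> 0" using N by (simp add: m_def)
  obtain D1 D2 where sol: "\<And>eta K. continuous_on UNIV eta \<Longrightarrow> K \<ge> 0 \<Longrightarrow>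
     \<forall>s\<ge>0. \<bar>eta s\<bar> \<le> K * (1 + s) powr (-\<beta>) \<Longrightarrow>
     \<exists>g g' g''. radial_solution DIM('a) lam eta g g' g''
        \<and> (\<forall>r\<ge>0. (1 + r) powr m * \<bar>g r\<bar> \<le> D1 * K) \<and> (\<forall>r\<ge>0. (1 + r) powr m * \<bar>g' r\<bar> \<le> D2 * K)"
    using radial_ode_decaying_solution[OF lam N \<beta>] unfolding m_def by blast
  obtain b :: 'a where b: "norm b = 1" using norm_Basis nonempty_Basis by blast
  { fix \<eta> :: "'a \<Rightarrow> real" assume \<eta>: "\<eta> \<in> Sbar \<alpha> \<beta>"
    obtain K where K: "wnorm \<alpha> \<beta> \<eta> = ereal K" "K \<ge> 0"
      and cont: "continuous_on UNIV (\<lambda>s. \<eta> (s *\<^sub>R b))"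
      and decay: "\<And>s. s \<ge> 0 \<Longrightarrow> \<bar>\<eta> (s *\<^sub>R b)\<bar> \<le> K * (1 + s) powr (-\<beta>)"
      and profile: "\<And>y. \<eta> y = \<eta> (norm y *\<^sub>R b)"
      using Sbar_radial_profile[OF \<eta> \<alpha>(1) b] by blast
    obtain g g' g'' where gc: "continuous_on UNIV g"
      and dg: "\<forall>r>0. (g has_real_derivative g' r) (at r) \<and> (g' has_real_derivative g'' r) (at r)"
      and ode: "\<forall>r>0. g'' r + (real DIM('a) - 1) / r * g' r + lam * g r = \<eta> (r *\<^sub>R b)"
      and gD: "\<forall>r\<ge>0. (1 + r) powr m * \<bar>g r\<bar> \<le> D1 * K"
      and g'D: "\<forall>r\<ge>0. (1 + r) powr m * \<bar>g' r\<bar> \<le> D2 * K"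
      using sol[OF cont K(2)] decay unfolding radial_solution_def by blast
    define h where "h = (\<lambda>y::'a. g (norm y))"
    have h: "wnorm \<alpha> m h \<le> ereal (D1 * K + 2 * (m * (D1 * K) + D2 * K))"
      unfolding h_def using gD g'D \<alpha> dg by (intro wnorm_radial_le[OF gc _ _ _ m]) auto
    then have "h \<in> Sbar \<alpha> m" by (auto simp: Sbar_def radial_def h_def)
    moreover have "wnorm \<alpha> m h \<le> ereal (D1 + 2 * (m * D1 + D2)) * wnorm \<alpha> \<beta> \<eta>"
      using h by (simp add: K(1) algebra_simps)
    moreover have "g'' (norm y) + (real DIM('a) - 1) / norm y * g' (norm y) + lam * g (norm y) = \<eta> y"
      if "y \<noteq> 0" for y
      using ode that profile[of y] by simp
    ultimately have "\<exists>(h::'a \<Rightarrow> real) g g' g''. h \<in> Sbar \<alpha> m \<and> (\<forall>y. h y = g (norm y))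
        \<and> (\<forall>r>0. (g has_real_derivative g' r) (at r) \<and> (g' has_real_derivative g'' r) (at r))
        \<and> (\<forall>y. y \<noteq> 0 \<longrightarrow>
              g'' (norm y) + (real DIM('a) - 1) / norm y * g' (norm y) + lam * g (norm y) = \<eta> y)
        \<and> wnorm \<alpha> m h \<le> ereal (D1 + 2 * (m * D1 + D2)) * wnorm \<alpha> \<beta> \<eta>"
      using dg by - (rule exI[of _ h], rule exI[of _ g], rule exI[of _ g'], rule exI[of _ g''], simp add: h_def) }
  then show ?thesis unfolding m_def by blast
qed

end
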